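(* Let $X$ be an $h$-special complex quasi-projective variety, let $S$ be a quasi-projective variety and let $p:X\to S$ be a dominant morphism. Then $S$ is $h$-special.
   Context: For a complex quasi-projective variety $X$, define $x\sim y$ for $x,y\in X$ iff there exist holomorphic maps $f_1,\dots,f_l:\mathbb{C}\to X$ such that, with $Z_i$ the Zariski closure of $f_i(\mathbb{C})$, $x\in Z_1$, $Z_i\cap Z_{i+1}\ne\emptyset$ for $1\le i<l$, and $y\in Z_l$. $X$ is $h$-special iff $\{(x,y)\in X\times X:x\sim y\}$ is Zariski dense in $X\times X$. *)

theory Defs
  imports "HOL-Complex_Analysis.Complex_Analysis"
begin

text \<open>Projective space P^N over the complex numbers, with N+1 = CARD('n).
  A point of P^N is represented as the set of nonzero multiples of a
  nonzero vector of complex^'n (a punctured line).\<close>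

definition proj_pt :: "complex^'n \<Rightarrow> (complex^'n) set" where
  "proj_pt v = {c *s v | c. c \<noteq> 0}"

definition proj_space :: "(complex^'n) set set" where
  "proj_space = {proj_pt v | v. v \<noteq> 0}"

inductive_set polyfun :: "('a \<Rightarrow> complex) set \<Rightarrow> ('a \<Rightarrow> complex) set"
  for C :: "('a \<Rightarrow> complex) set" where
  const: "(\<lambda>_. c) \<in> polyfun C"
| coord: "g \<in> C \<Longrightarrow> g \<in> polyfun C"
| add: "f \<in> polyfun C \<Longrightarrow> g \<in> polyfun C \<Longrightarrow> (\<lambda>x. f x + g x) \<in> polyfun C"
| mult: "f \<in> polyfun C \<Longrightarrow> g \<in> polyfun C \<Longrightarrow> (\<lambda>x. f x * g x) \<in> polyfun C"

definition hom_poly :: "nat \<Rightarrow> (complex^'n \<Rightarrow> complex) \<Rightarrow> bool" where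
  "hom_poly d f \<longleftrightarrow> f \<in> polyfun (range (\<lambda>i v. vec_nth v i)) \<and>
     (\<forall>c v. f (c *s v) = c ^ d * f v)"

definition bihom_poly :: "nat \<Rightarrow> nat \<Rightarrow> ((complex^'n) \<times> (complex^'n) \<Rightarrow> complex) \<Rightarrow> bool" where
  "bihom_poly d e f \<longleftrightarrow>
     f \<in> polyfun (range (\<lambda>i (v, w). vec_nth v i) \<union> range (\<lambda>i (v, w). vec_nth w i)) \<and>
     (\<forall>c c' v w. f (c *s v, c' *s w) = c ^ d * c' ^ e * f (v, w))"

definition zariski_closed :: "(complex^'n) set set \<Rightarrow> bool" where
  "zariski_closed Z \<longleftrightarrow> (\<exists>F. (\<forall>f\<in>F. \<exists>d. hom_poly d f) \<and>
     Z = {P \<in> proj_space. \<forall>f\<in>F. \<forall>v\<in>P. f v = 0})"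

definition zariski_closed2 :: "((complex^'n) set \<times> (complex^'n) set) set \<Rightarrow> bool" where
  "zariski_closed2 Z \<longleftrightarrow> (\<exists>F. (\<forall>f\<in>F. \<exists>d e. bihom_poly d e f) \<and>
     Z = {(P, Q) \<in> proj_space \<times> proj_space. \<forall>f\<in>F. \<forall>v\<in>P. \<forall>w\<in>Q. f (v, w) = 0})"

definition quasi_projective :: "(complex^'n) set set \<Rightarrow> bool" where
  "quasi_projective X \<longleftrightarrow> (\<exists>Z1 Z2. zariski_closed Z1 \<and> zariski_closed Z2 \<and> X = Z1 - Z2)"

definition rel_closed :: "(complex^'n) set set \<Rightarrow> (complex^'n) set set \<Rightarrow> bool" where
  "rel_closed X A \<longleftrightarrow> (\<exists>Z. zariski_closed Z \<and> A = X \<inter> Z)"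

definition qp_variety :: "(complex^'n) set set \<Rightarrow> bool" where
  "qp_variety X \<longleftrightarrow> quasi_projective X \<and> X \<noteq> {} \<and>
     (\<forall>A B. rel_closed X A \<and> rel_closed X B \<and> X = A \<union> B \<longrightarrow> A = X \<or> B = X)"

definition zclosure :: "(complex^'n) set set \<Rightarrow> (complex^'n) set set \<Rightarrow> (complex^'n) set set" where
  "zclosure X A = X \<inter> \<Inter>{Z. zariski_closed Z \<and> A \<subseteq> Z}"

definition holo_curve :: "(complex^'n) set set \<Rightarrow> (complex \<Rightarrow> (complex^'n) set) \<Rightarrow> bool" where
  "holo_curve X f \<longleftrightarrow> (\<forall>t. f t \<in> X) \<and>
     (\<forall>t0. \<exists>U g. open U \<and> t0 \<in> U \<and> (\<forall>i. (\<lambda>t. vec_nth (g t) i) holomorphic_on U) \<and>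
        (\<forall>t\<in>U. g t \<noteq> 0 \<and> f t = proj_pt (g t)))"

definition h_equiv :: "(complex^'n) set set \<Rightarrow> (complex^'n) set \<Rightarrow> (complex^'n) set \<Rightarrow> bool" where
  "h_equiv X x y \<longleftrightarrow> (\<exists>fs. fs \<noteq> [] \<and> (\<forall>f\<in>set fs. holo_curve X f) \<and>
     x \<in> zclosure X (range (hd fs)) \<and> y \<in> zclosure X (range (last fs)) \<and>
     (\<forall>i. Suc i < length fs \<longrightarrow>
        zclosure X (range (fs ! i)) \<inter> zclosure X (range (fs ! Suc i)) \<noteq> {}))"

definition h_special :: "(complex^'n) set set \<Rightarrow> bool" where
  "h_special X \<longleftrightarrow> (\<forall>Z. zariski_closed2 Z \<and>
     {(x, y). x \<in> X \<and> y \<in> X \<and> h_equiv X x y} \<subseteq> Z \<longrightarrow> X \<times> X \<subseteq> Z)"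

definition qp_morphism :: "(complex^'n) set set \<Rightarrow> (complex^'m) set set
    \<Rightarrow> ((complex^'n) set \<Rightarrow> (complex^'m) set) \<Rightarrow> bool" where
  "qp_morphism X S p \<longleftrightarrow> (\<forall>x\<in>X. p x \<in> S) \<and>
     (\<forall>x\<in>X. \<exists>d g Z. zariski_closed Z \<and> x \<notin> Z \<and> (\<forall>j. hom_poly d (\<lambda>v. vec_nth (g v) j)) \<and>
        (\<forall>y\<in>X - Z. \<forall>v\<in>y. g v \<noteq> 0 \<and> p y = proj_pt (g v)))"

definition dominant :: "(complex^'n) set set \<Rightarrow> (complex^'m) set set
    \<Rightarrow> ((complex^'n) set \<Rightarrow> (complex^'m) set) \<Rightarrow> bool" where
  "dominant X S p \<longleftrightarrow> (\<forall>Z. zariski_closed Z \<and> p ` X \<subseteq> Z \<longrightarrow> S \<subseteq> Z)"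

end

theory Submission
  imports Defs
begin

(* A morphism p maps entire curves to entire curves and Zariski closures into Zariski closures,
   so it maps h-equivalent points to h-equivalent points. Given a closed Z in S x S containing the
   h-relation of S, its preimage under p x p is a closed subset of X x X containing the
   h-relation of X, hence all of X x X. So p x p maps X x X into Z, and applying dominance of p
   to the (closed) slices of Z one factor at a time gives S x S \<subseteq> Z. *)

abbreviation coord_funs :: "(complex^'n \<Rightarrow> complex) set" where
  "coord_funs \<equiv> range (\<lambda>i v. vec_nth v i)"

abbreviation bicoord_funs :: "((complex^'n) \<times> (complex^'n) \<Rightarrow> complex) set" where
  "bicoord_funs \<equiv> range (\<lambda>i (v, w). vec_nth v i) \<union> range (\<lambda>i (v, w). vec_nth w i)"

lemma polyfun_subst:
  assumes "f \<in> polyfun C" and "\<And>c. c \<in> C \<Longrightarrow> (\<lambda>x. c (\<phi> x)) \<in> polyfun D"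
  shows "(\<lambda>x. f (\<phi> x)) \<in> polyfun D"
  using assms(1) by induct (auto intro: polyfun.intros assms(2))

lemma polyfun_holomorphic_on:
  assumes "f \<in> polyfun C" and "\<And>c. c \<in> C \<Longrightarrow> (\<lambda>t. c (\<phi> t)) holomorphic_on U"
  shows "(\<lambda>t. f (\<phi> t)) holomorphic_on U"
  using assms(1) by induct (auto intro: holomorphic_intros assms(2))

lemma in_proj_pt_self: "v \<in> proj_pt v"
  unfolding proj_pt_def by (auto intro!: exI[of _ 1])

lemma proj_ptE:
  assumes "w \<in> proj_pt v"
  obtains c where "c \<noteq> 0" "w = c *s v"
  using assms unfolding proj_pt_def by auto

lemma proj_pt_in_proj_space: "v \<noteq> 0 \<Longrightarrow> proj_pt v \<in> proj_space"
  unfolding proj_space_def by blast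

lemma proj_space_nonempty: "P \<in> proj_space \<Longrightarrow> P \<noteq> {}"
  unfolding proj_space_def using in_proj_pt_self by blast

lemma hom_poly_smult: "hom_poly d f \<Longrightarrow> f (c *s v) = c ^ d * f v"
  by (simp add: hom_poly_def)

lemma hom_poly_map_smult:
  "\<forall>j. hom_poly d (\<lambda>v. vec_nth (G v) j) \<Longrightarrow> G (c *s v) = c ^ d *s G v"
  by (simp add: vec_eq_iff hom_poly_def)

lemma hom_poly_nonzero_on_point:
  assumes "hom_poly d h" "P \<in> proj_space" "v0 \<in> P" "h v0 \<noteq> 0" "v \<in> P"
  shows "h v \<noteq> 0"
proof -
  obtain u where u: "P = proj_pt u" using assms(2) unfolding proj_space_def by auto
  obtain c0 where c0: "c0 \<noteq> 0" "v0 = c0 *s u" using assms(3) u by (auto elim: proj_ptE)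
  obtain c where c: "c \<noteq> 0" "v = c *s u" using assms(5) u by (auto elim: proj_ptE)
  have "v = (c / c0) *s v0" using c c0 by (simp add: vector_smult_assoc)
  then have "h v = (c / c0) ^ d * h v0" using hom_poly_smult[OF assms(1)] by simp
  then show ?thesis using c c0 assms(4) by simp
qed

lemma bihom_poly_smult: "bihom_poly d e f \<Longrightarrow> f (c *s v, c' *s w) = c ^ d * c' ^ e * f (v, w)"
  by (simp add: bihom_poly_def)

lemma bihom_poly_vanishes_on_points:
  assumes "bihom_poly d e f" "f (v, w) = 0" "v' \<in> proj_pt v" "w' \<in> proj_pt w"
  shows "f (v', w') = 0"
  using assms(3,4) by (elim proj_ptE) (simp add: bihom_poly_smult[OF assms(1)] assms(2))

lemma bihom_poly_fix_snd:
  assumes "bihom_poly d e f"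
  shows "hom_poly d (\<lambda>v. f (v, w))"
proof -
  have "(\<lambda>v. f (v, w)) \<in> polyfun coord_funs"
  proof (rule polyfun_subst[where \<phi> = "\<lambda>v. (v, w)"])
    show "f \<in> polyfun bicoord_funs" using assms unfolding bihom_poly_def by blast
  qed (auto intro: polyfun.coord polyfun.const)
  moreover have "f (c *s v, w) = c ^ d * f (v, w)" for c v
    using bihom_poly_smult[OF assms, of c v 1 w] by simp
  ultimately show ?thesis unfolding hom_poly_def by blast
qed

lemma bihom_poly_fix_fst:
  assumes "bihom_poly d e f"
  shows "hom_poly e (\<lambda>w. f (v, w))"
proof -
  have "(\<lambda>w. f (v, w)) \<in> polyfun coord_funs"
  proof (rule polyfun_subst[where \<phi> = "\<lambda>w. (v, w)"])
    show "f \<in> polyfun bicoord_funs" using assms unfolding bihom_poly_def by blast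
  qed (auto intro: polyfun.coord polyfun.const)
  moreover have "f (v, c *s w) = c ^ e * f (v, w)" for c w
    using bihom_poly_smult[OF assms, of 1 v c w] by simp
  ultimately show ?thesis unfolding hom_poly_def by blast
qed

lemma bihom_poly_fst:
  assumes "hom_poly d h"
  shows "bihom_poly d 0 (\<lambda>(v, w). h v)"
proof -
  have "(\<lambda>x. h (fst x)) \<in> polyfun bicoord_funs"
  proof (rule polyfun_subst[where \<phi> = fst])
    show "h \<in> polyfun coord_funs" using assms unfolding hom_poly_def by blast
  qed (rule polyfun.coord, force simp: split_def)
  then show ?thesis
    using assms unfolding bihom_poly_def hom_poly_def by (simp add: case_prod_beta')
qed

lemma bihom_poly_snd:
  assumes "hom_poly e h"
  shows "bihom_poly 0 e (\<lambda>(v, w). h w)"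
proof -
  have "(\<lambda>x. h (snd x)) \<in> polyfun bicoord_funs"
  proof (rule polyfun_subst[where \<phi> = snd])
    show "h \<in> polyfun coord_funs" using assms unfolding hom_poly_def by blast
  qed (rule polyfun.coord, force simp: split_def)
  then show ?thesis
    using assms unfolding bihom_poly_def hom_poly_def by (simp add: case_prod_beta')
qed

lemma bihom_poly_mult:
  assumes "bihom_poly d e f" "bihom_poly d' e' g"
  shows "bihom_poly (d + d') (e + e') (\<lambda>x. f x * g x)"
  using assms unfolding bihom_poly_def by (auto intro: polyfun.mult simp: power_add)

lemma bihom_poly_subst:
  fixes G H :: "complex^'n \<Rightarrow> complex^'m"
  assumes "bihom_poly d e f" "\<forall>j. hom_poly k (\<lambda>v. vec_nth (G v) j)" "\<forall>j. hom_poly l (\<lambda>w. vec_nth (H w) j)"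
  shows "bihom_poly (k * d) (l * e) (\<lambda>(v, w). f (G v, H w))"
proof -
  have "(\<lambda>x. f (G (fst x), H (snd x))) \<in> polyfun bicoord_funs"
  proof (rule polyfun_subst[where \<phi> = "\<lambda>x. (G (fst x), H (snd x))"])
    show "f \<in> polyfun bicoord_funs" using assms(1) unfolding bihom_poly_def by blast
  next
    fix c :: "(complex^'m) \<times> (complex^'m) \<Rightarrow> complex"
    assume "c \<in> bicoord_funs"
    then obtain j where "c = (\<lambda>(v, w). vec_nth v j) \<or> c = (\<lambda>(v, w). vec_nth w j)" by blast
    then show "(\<lambda>x. c (G (fst x), H (snd x))) \<in> polyfun bicoord_funs"
    proof
      assume "c = (\<lambda>(v, w). vec_nth v j)"
      then have "(\<lambda>x. c (G (fst x), H (snd x))) = (\<lambda>(v, w). vec_nth (G v) j)" by auto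
      then show ?thesis using bihom_poly_fst[OF assms(2)[rule_format, of j]]
        unfolding bihom_poly_def by simp
    next
      assume "c = (\<lambda>(v, w). vec_nth w j)"
      then have "(\<lambda>x. c (G (fst x), H (snd x))) = (\<lambda>(v, w). vec_nth (H w) j)" by auto
      then show ?thesis using bihom_poly_snd[OF assms(3)[rule_format, of j]]
        unfolding bihom_poly_def by simp
    qed
  qed
  moreover have "f (G (c *s v), H (c' *s w)) = c ^ (k * d) * c' ^ (l * e) * f (G v, H w)" for c c' v w
    by (simp add: hom_poly_map_smult[OF assms(2)] hom_poly_map_smult[OF assms(3)]
        bihom_poly_smult[OF assms(1)] power_mult)
  ultimately show ?thesis unfolding bihom_poly_def by (simp add: case_prod_beta')
qed

lemma zariski_closed_subset_proj_space: "zariski_closed Z \<Longrightarrow> Z \<subseteq> proj_space"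
  unfolding zariski_closed_def by auto

lemma quasi_projective_subset_proj_space: "quasi_projective X \<Longrightarrow> X \<subseteq> proj_space"
  unfolding quasi_projective_def using zariski_closed_subset_proj_space by blast

lemma zariski_closed2_slice_fst:
  assumes "zariski_closed2 Z" "Q \<in> proj_space"
  shows "zariski_closed {P \<in> proj_space. (P, Q) \<in> Z}"
proof -
  obtain F where F: "\<forall>f\<in>F. \<exists>d e. bihom_poly d e f"
    and Z: "Z = {(P, Q) \<in> proj_space \<times> proj_space. \<forall>f\<in>F. \<forall>v\<in>P. \<forall>w\<in>Q. f (v, w) = 0}"
    using assms(1) unfolding zariski_closed2_def by blast
  let ?F = "{\<lambda>v. f (v, w) | f w. f \<in> F \<and> w \<in> Q}"
  have "\<forall>g\<in>?F. \<exists>d. hom_poly d g" using F bihom_poly_fix_snd by blast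
  moreover have "{P \<in> proj_space. (P, Q) \<in> Z} = {P \<in> proj_space. \<forall>g\<in>?F. \<forall>v\<in>P. g v = 0}"
    using assms(2) unfolding Z by auto
  ultimately show ?thesis unfolding zariski_closed_def by blast
qed

lemma zariski_closed2_slice_snd:
  assumes "zariski_closed2 Z" "P \<in> proj_space"
  shows "zariski_closed {Q \<in> proj_space. (P, Q) \<in> Z}"
proof -
  obtain F where F: "\<forall>f\<in>F. \<exists>d e. bihom_poly d e f"
    and Z: "Z = {(P, Q) \<in> proj_space \<times> proj_space. \<forall>f\<in>F. \<forall>v\<in>P. \<forall>w\<in>Q. f (v, w) = 0}"
    using assms(1) unfolding zariski_closed2_def by blast
  let ?F = "{\<lambda>w. f (v, w) | f v. f \<in> F \<and> v \<in> P}"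
  have "\<forall>g\<in>?F. \<exists>d. hom_poly d g" using F bihom_poly_fix_fst by blast
  moreover have "{Q \<in> proj_space. (P, Q) \<in> Z} = {Q \<in> proj_space. \<forall>g\<in>?F. \<forall>w\<in>Q. g w = 0}"
    using assms(2) unfolding Z by auto
  ultimately show ?thesis unfolding zariski_closed_def by blast
qed

lemma zariski_closed2_times_proj_space:
  fixes Z :: "(complex^'n) set set"
  assumes "zariski_closed Z"
  shows "zariski_closed2 (Z \<times> proj_space)"
proof -
  obtain H where H: "\<forall>h\<in>H. \<exists>d. hom_poly d h"
    and Z: "Z = {P \<in> proj_space. \<forall>h\<in>H. \<forall>v\<in>P. h v = 0}"
    using assms unfolding zariski_closed_def by blast
  let ?F = "{\<lambda>(v, w :: complex^'n). h v | h. h \<in> H}"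
  have "\<forall>f\<in>?F. \<exists>d e. bihom_poly d e f" using H bihom_poly_fst by blast
  moreover have "Z \<times> proj_space =
      {(P, Q) \<in> proj_space \<times> proj_space. \<forall>f\<in>?F. \<forall>v\<in>P. \<forall>w\<in>Q. f (v, w) = 0}"
    unfolding Z using proj_space_nonempty by fastforce
  ultimately show ?thesis unfolding zariski_closed2_def by blast
qed

definition morphism_chart :: "(complex^'n) set set \<Rightarrow> ((complex^'n) set \<Rightarrow> (complex^'m) set)
    \<Rightarrow> (complex^'n \<Rightarrow> complex) \<Rightarrow> (complex^'n \<Rightarrow> complex^'m) \<Rightarrow> bool" where
  "morphism_chart X p h G \<longleftrightarrow> (\<exists>a. hom_poly a h) \<and> (\<exists>d. \<forall>j. hom_poly d (\<lambda>v. vec_nth (G v) j)) \<and>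
     (\<forall>P\<in>X. \<forall>v\<in>P. h v \<noteq> 0 \<longrightarrow> G v \<noteq> 0 \<and> p P = proj_pt (G v))"

lemma qp_morphism_chart_at:
  assumes "qp_morphism X S p" "X \<subseteq> proj_space" "P \<in> X"
  obtains h G where "morphism_chart X p h G" "\<forall>v\<in>P. h v \<noteq> 0"
proof -
  obtain d G Z where Z: "zariski_closed Z" "P \<notin> Z" and G: "\<forall>j. hom_poly d (\<lambda>v. vec_nth (G v) j)"
    and rep: "\<forall>Q\<in>X - Z. \<forall>v\<in>Q. G v \<noteq> 0 \<and> p Q = proj_pt (G v)"
    using assms(1,3) unfolding qp_morphism_def by blast
  obtain H where H: "\<forall>h\<in>H. \<exists>a. hom_poly a h" and Z_eq: "Z = {Q \<in> proj_space. \<forall>h\<in>H. \<forall>v\<in>Q. h v = 0}"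
    using Z(1) unfolding zariski_closed_def by blast
  obtain h v0 where h: "h \<in> H" "v0 \<in> P" "h v0 \<noteq> 0" using Z(2) assms(2,3) unfolding Z_eq by blast
  obtain a where a: "hom_poly a h" using H h(1) by blast
  have "morphism_chart X p h G" unfolding morphism_chart_def using a G rep h(1) unfolding Z_eq by blast
  moreover have "\<forall>v\<in>P. h v \<noteq> 0" using hom_poly_nonzero_on_point[OF a _ h(2,3)] assms(2,3) by blast
  ultimately show thesis using that by blast
qed

lemma qp_morphism_in_proj_space:
  assumes "qp_morphism X S p" "X \<subseteq> proj_space" "P \<in> X"
  shows "p P \<in> proj_space"
proof -
  obtain h G where chart: "morphism_chart X p h G" "\<forall>v\<in>P. h v \<noteq> 0"
    using qp_morphism_chart_at[OF assms] .
  obtain v where "v \<in> P" using assms(2,3) proj_space_nonempty by blast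
  then show ?thesis using chart assms(3) proj_pt_in_proj_space unfolding morphism_chart_def by metis
qed

lemma bihom_poly_chart_product:
  assumes "morphism_chart X p h1 G1" "morphism_chart X p h2 G2" "bihom_poly d e f"
  shows "\<exists>d' e'. bihom_poly d' e' (\<lambda>(v, w). h1 v * f (G1 v, G2 w) * h2 w)"
proof -
  obtain a1 k1 where "hom_poly a1 h1" "\<forall>j. hom_poly k1 (\<lambda>v. vec_nth (G1 v) j)"
    using assms(1) unfolding morphism_chart_def by blast
  moreover obtain a2 k2 where "hom_poly a2 h2" "\<forall>j. hom_poly k2 (\<lambda>v. vec_nth (G2 v) j)"
    using assms(2) unfolding morphism_chart_def by blast
  ultimately have "bihom_poly (a1 + k1 * d + 0) (0 + k2 * e + a2)
      (\<lambda>x. (case x of (v, w) \<Rightarrow> h1 v) * (case x of (v, w) \<Rightarrow> f (G1 v, G2 w)) * (case x of (v, w) \<Rightarrow> h2 w))"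
    by (intro bihom_poly_mult bihom_poly_fst bihom_poly_snd bihom_poly_subst assms(3))
  then show ?thesis by (auto simp: case_prod_beta')
qed

lemma morphism_chart_vanishes_iff:
  assumes "morphism_chart X p h1 G1" "morphism_chart X p h2 G2" "bihom_poly d e f"
    and "P \<in> X" "Q \<in> X" "v \<in> P" "w \<in> Q" "h1 v \<noteq> 0" "h2 w \<noteq> 0"
  shows "(\<forall>v'\<in>p P. \<forall>w'\<in>p Q. f (v', w') = 0) \<longleftrightarrow> f (G1 v, G2 w) = 0"
proof -
  have "p P = proj_pt (G1 v)" "p Q = proj_pt (G2 w)"
    using assms unfolding morphism_chart_def by blast+
  then show ?thesis using in_proj_pt_self bihom_poly_vanishes_on_points[OF assms(3)] by metis
qed

(* Each product vanishes wherever h1 or h2 does, i.e. off the charts, while on the charts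
   it vanishes iff f vanishes at the image point, so these products cut out the preimage. *)
definition chart_pullback :: "(complex^'n) set set \<Rightarrow> ((complex^'n) set \<Rightarrow> (complex^'m) set)
    \<Rightarrow> ((complex^'m) \<times> (complex^'m) \<Rightarrow> complex) set \<Rightarrow> ((complex^'n) \<times> (complex^'n) \<Rightarrow> complex) set" where
  "chart_pullback X p F = {\<lambda>(v, w). h1 v * f (G1 v, G2 w) * h2 w | h1 G1 h2 G2 f.
     morphism_chart X p h1 G1 \<and> morphism_chart X p h2 G2 \<and> f \<in> F}"

lemma chart_pullback_bihom:
  assumes "\<forall>f\<in>F. \<exists>d e. bihom_poly d e f"
  shows "\<forall>g\<in>chart_pullback X p F. \<exists>d e. bihom_poly d e g"
proof
  fix g assume "g \<in> chart_pullback X p F"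
  then obtain h1 G1 h2 G2 f where "morphism_chart X p h1 G1" "morphism_chart X p h2 G2" "f \<in> F"
    and "g = (\<lambda>(v, w). h1 v * f (G1 v, G2 w) * h2 w)"
    unfolding chart_pullback_def by blast
  then show "\<exists>d e. bihom_poly d e g" using assms bihom_poly_chart_product by blast
qed

lemma chart_pullback_vanishes_iff:
  assumes mor: "qp_morphism X S p" and X: "X \<subseteq> proj_space" and F: "\<forall>f\<in>F. \<exists>d e. bihom_poly d e f"
    and PQ: "P \<in> X" "Q \<in> X"
  shows "(\<forall>g\<in>chart_pullback X p F. \<forall>v\<in>P. \<forall>w\<in>Q. g (v, w) = 0) \<longleftrightarrow>
    (\<forall>f\<in>F. \<forall>v'\<in>p P. \<forall>w'\<in>p Q. f (v', w') = 0)"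
proof (intro iffI ballI)
  fix f v' w' assume pullback: "\<forall>g\<in>chart_pullback X p F. \<forall>v\<in>P. \<forall>w\<in>Q. g (v, w) = 0"
    and f: "f \<in> F" and "v' \<in> p P" "w' \<in> p Q"
  obtain h1 G1 where chart1: "morphism_chart X p h1 G1" "\<forall>v\<in>P. h1 v \<noteq> 0"
    using qp_morphism_chart_at[OF mor X PQ(1)] .
  obtain h2 G2 where chart2: "morphism_chart X p h2 G2" "\<forall>w\<in>Q. h2 w \<noteq> 0"
    using qp_morphism_chart_at[OF mor X PQ(2)] .
  obtain v w where vw: "v \<in> P" "w \<in> Q" using PQ X proj_space_nonempty by blast
  have "(\<lambda>(v, w). h1 v * f (G1 v, G2 w) * h2 w) \<in> chart_pullback X p F"
    unfolding chart_pullback_def using chart1 chart2 f by blast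
  then have "h1 v * f (G1 v, G2 w) * h2 w = 0" using pullback vw by fastforce
  then have "f (G1 v, G2 w) = 0" using chart1(2) chart2(2) vw by simp
  moreover obtain d e where "bihom_poly d e f" using F f by blast
  ultimately show "f (v', w') = 0"
    using morphism_chart_vanishes_iff[OF chart1(1) chart2(1) _ PQ vw] chart1(2) chart2(2) vw
      \<open>v' \<in> p P\<close> \<open>w' \<in> p Q\<close> by blast
next
  fix g v w assume image: "\<forall>f\<in>F. \<forall>v'\<in>p P. \<forall>w'\<in>p Q. f (v', w') = 0"
    and "g \<in> chart_pullback X p F" "v \<in> P" "w \<in> Q"
  then obtain h1 G1 h2 G2 f where charts: "morphism_chart X p h1 G1" "morphism_chart X p h2 G2"
    and f: "f \<in> F" and g: "g = (\<lambda>(v, w). h1 v * f (G1 v, G2 w) * h2 w)"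
    unfolding chart_pullback_def by blast
  obtain d e where "bihom_poly d e f" using F f by blast
  have "f (G1 v, G2 w) = 0" if "h1 v \<noteq> 0" "h2 w \<noteq> 0"
    using morphism_chart_vanishes_iff[OF charts \<open>bihom_poly d e f\<close> PQ \<open>v \<in> P\<close> \<open>w \<in> Q\<close> that]
      bspec[OF image f] by blast
  then show "g (v, w) = 0" unfolding g by auto
qed

lemma zariski_closed2_preimage:
  fixes p :: "(complex^'n) set \<Rightarrow> (complex^'m) set"
  assumes mor: "qp_morphism X S p" and X: "X \<subseteq> proj_space" and Z: "zariski_closed2 Z"
  obtains Z' where "zariski_closed2 Z'" "\<And>P Q. P \<in> X \<Longrightarrow> Q \<in> X \<Longrightarrow> (P, Q) \<in> Z' \<longleftrightarrow> (p P, p Q) \<in> Z"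
proof -
  obtain F where F: "\<forall>f\<in>F. \<exists>d e. bihom_poly d e f"
    and Z_eq: "Z = {(P, Q) \<in> proj_space \<times> proj_space. \<forall>f\<in>F. \<forall>v\<in>P. \<forall>w\<in>Q. f (v, w) = 0}"
    using Z unfolding zariski_closed2_def by blast
  define Z' where "Z' = {(P, Q) \<in> proj_space \<times> proj_space.
    \<forall>g\<in>chart_pullback X p F. \<forall>v\<in>P. \<forall>w\<in>Q. g (v, w) = 0}"
  have "zariski_closed2 Z'"
    unfolding zariski_closed2_def Z'_def
    by (intro exI[of _ "chart_pullback X p F"] conjI chart_pullback_bihom[OF F] refl)
  moreover have "(P, Q) \<in> Z' \<longleftrightarrow> (p P, p Q) \<in> Z" if PQ: "P \<in> X" "Q \<in> X" for P Q
  proof -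
    have "P \<in> proj_space" "Q \<in> proj_space" "p P \<in> proj_space" "p Q \<in> proj_space"
      using PQ X qp_morphism_in_proj_space[OF mor X] by auto
    then show ?thesis using chart_pullback_vanishes_iff[OF mor X F PQ] unfolding Z'_def Z_eq by simp
  qed
  ultimately show thesis using that by blast
qed

lemma zariski_closed_preimage:
  fixes p :: "(complex^'n) set \<Rightarrow> (complex^'m) set"
  assumes mor: "qp_morphism X S p" and X: "X \<subseteq> proj_space" "X \<noteq> {}" and Z: "zariski_closed Z"
  obtains Z' where "zariski_closed Z'" "\<And>P. P \<in> X \<Longrightarrow> P \<in> Z' \<longleftrightarrow> p P \<in> Z"
proof -
  obtain Z2 where Z2: "zariski_closed2 Z2"
    "\<And>P Q. P \<in> X \<Longrightarrow> Q \<in> X \<Longrightarrow> (P, Q) \<in> Z2 \<longleftrightarrow> (p P, p Q) \<in> Z \<times> proj_space"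
    using zariski_closed2_preimage[OF mor X(1) zariski_closed2_times_proj_space[OF Z]] by blast
  obtain Q where Q: "Q \<in> X" using X(2) by blast
  have "zariski_closed {P \<in> proj_space. (P, Q) \<in> Z2}"
    using zariski_closed2_slice_fst[OF Z2(1)] Q X(1) by blast
  moreover have "P \<in> {P \<in> proj_space. (P, Q) \<in> Z2} \<longleftrightarrow> p P \<in> Z" if "P \<in> X" for P
    using Z2(2)[OF that Q] qp_morphism_in_proj_space[OF mor X(1) Q] that X(1) by blast
  ultimately show thesis using that by blast
qed

lemma zclosure_image:
  fixes p :: "(complex^'n) set \<Rightarrow> (complex^'m) set"
  assumes mor: "qp_morphism X S p" and X: "X \<subseteq> proj_space" and A: "A \<subseteq> X" and x: "x \<in> zclosure X A"
  shows "p x \<in> zclosure S (p ` A)"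
proof -
  have xX: "x \<in> X" and x_closed: "\<And>Z. zariski_closed Z \<Longrightarrow> A \<subseteq> Z \<Longrightarrow> x \<in> Z"
    using x unfolding zclosure_def by auto
  have "p x \<in> Z" if Z: "zariski_closed Z" "p ` A \<subseteq> Z" for Z
  proof -
    obtain Z' where Z': "zariski_closed Z'" "\<And>P. P \<in> X \<Longrightarrow> P \<in> Z' \<longleftrightarrow> p P \<in> Z"
      using zariski_closed_preimage[OF mor X _ Z(1)] xX by blast
    have "A \<subseteq> Z'" using Z' Z(2) A by blast
    then show ?thesis using x_closed Z' xX by blast
  qed
  moreover have "p x \<in> S" using mor xX unfolding qp_morphism_def by blast
  ultimately show ?thesis unfolding zclosure_def by blast
qed

lemma holo_curve_comp:
  assumes mor: "qp_morphism X S p" and X: "X \<subseteq> proj_space" and f: "holo_curve X f"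
  shows "holo_curve S (p \<circ> f)"
  unfolding holo_curve_def
proof (intro conjI allI)
  fix t show "(p \<circ> f) t \<in> S" using mor f unfolding qp_morphism_def holo_curve_def by auto
next
  fix t0
  have ft0: "f t0 \<in> X" using f unfolding holo_curve_def by blast
  obtain U g where U: "open U" "t0 \<in> U" and g_holo: "\<forall>i. (\<lambda>t. vec_nth (g t) i) holomorphic_on U"
    and g_lift: "\<forall>t\<in>U. g t \<noteq> 0 \<and> f t = proj_pt (g t)"
    using f unfolding holo_curve_def by blast
  obtain h G where chart: "morphism_chart X p h G" "\<forall>v\<in>f t0. h v \<noteq> 0"
    using qp_morphism_chart_at[OF mor X ft0] .
  obtain a d where a: "hom_poly a h" and d: "\<forall>j. hom_poly d (\<lambda>v. vec_nth (G v) j)"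
    and rep: "\<forall>P\<in>X. \<forall>v\<in>P. h v \<noteq> 0 \<longrightarrow> G v \<noteq> 0 \<and> p P = proj_pt (G v)"
    using chart(1) unfolding morphism_chart_def by blast
  have comp_holo: "(\<lambda>t. q (g t)) holomorphic_on U" if "q \<in> polyfun coord_funs" for q
    by (rule polyfun_holomorphic_on[OF that]) (use g_holo in auto)
  have g_in_f: "g t \<in> f t" if "t \<in> U" for t using g_lift that in_proj_pt_self by metis
  define U' where "U' = U \<inter> (\<lambda>t. h (g t)) -` (- {0})"
  have "(\<lambda>t. h (g t)) holomorphic_on U" using comp_holo a unfolding hom_poly_def by blast
  then have "open U'" unfolding U'_def
    by (rule continuous_open_preimage[OF holomorphic_on_imp_continuous_on U(1)]) auto
  moreover have "t0 \<in> U'" unfolding U'_def using U(2) g_in_f chart(2) by blast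
  moreover have "(\<lambda>t. vec_nth (G (g t)) j) holomorphic_on U'" for j
  proof -
    have "(\<lambda>t. vec_nth (G (g t)) j) holomorphic_on U" using comp_holo d unfolding hom_poly_def by blast
    then show ?thesis by (rule holomorphic_on_subset) (auto simp: U'_def)
  qed
  moreover have "G (g t) \<noteq> 0 \<and> (p \<circ> f) t = proj_pt (G (g t))" if "t \<in> U'" for t
  proof -
    have "t \<in> U" "h (g t) \<noteq> 0" using that unfolding U'_def by auto
    moreover have "f t \<in> X" using f unfolding holo_curve_def by blast
    ultimately have "G (g t) \<noteq> 0 \<and> p (f t) = proj_pt (G (g t))" using rep g_in_f by blast
    then show ?thesis by simp
  qed
  ultimately show "\<exists>U g. open U \<and> t0 \<in> U \<and> (\<forall>i. (\<lambda>t. vec_nth (g t) i) holomorphic_on U) \<and>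
      (\<forall>t\<in>U. g t \<noteq> 0 \<and> (p \<circ> f) t = proj_pt (g t))"
    by (intro exI[of _ U'] exI[of _ "\<lambda>t. G (g t)"] conjI ballI allI) simp_all
qed

lemma h_equiv_image:
  fixes p :: "(complex^'n) set \<Rightarrow> (complex^'m) set"
  assumes mor: "qp_morphism X S p" and X: "X \<subseteq> proj_space" and xy: "h_equiv X x y"
  shows "h_equiv S (p x) (p y)"
proof -
  obtain fs where fs: "fs \<noteq> []" "\<forall>f\<in>set fs. holo_curve X f"
    "x \<in> zclosure X (range (hd fs))" "y \<in> zclosure X (range (last fs))"
    "\<forall>i. Suc i < length fs \<longrightarrow> zclosure X (range (fs ! i)) \<inter> zclosure X (range (fs ! Suc i)) \<noteq> {}"
    using xy unfolding h_equiv_def by blast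
  have zcl: "p z \<in> zclosure S (range (p \<circ> f))" if "f \<in> set fs" "z \<in> zclosure X (range f)" for f z
  proof -
    have "range f \<subseteq> X" using fs(2) that(1) unfolding holo_curve_def by blast
    from zclosure_image[OF mor X this that(2)] show ?thesis by (simp add: image_comp)
  qed
  define gs where "gs = map ((\<circ>) p) fs"
  have "gs \<noteq> []" using fs(1) unfolding gs_def by simp
  moreover have "\<forall>g\<in>set gs. holo_curve S g"
    using holo_curve_comp[OF mor X] fs(2) unfolding gs_def by auto
  moreover have "p x \<in> zclosure S (range (hd gs))" "p y \<in> zclosure S (range (last gs))"
    using zcl[OF _ fs(3)] zcl[OF _ fs(4)] fs(1) unfolding gs_def by (simp_all add: hd_map last_map)
  moreover have "zclosure S (range (gs ! i)) \<inter> zclosure S (range (gs ! Suc i)) \<noteq> {}"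
    if i: "Suc i < length gs" for i
  proof -
    obtain z where "z \<in> zclosure X (range (fs ! i))" "z \<in> zclosure X (range (fs ! Suc i))"
      using fs(5) i unfolding gs_def by auto
    then have "p z \<in> zclosure S (range (gs ! i))" "p z \<in> zclosure S (range (gs ! Suc i))"
      using zcl i unfolding gs_def by auto
    then show ?thesis by blast
  qed
  ultimately show ?thesis unfolding h_equiv_def by blast
qed

lemma dominant_square_subset:
  assumes dom: "dominant X S p" and S: "S \<subseteq> proj_space" and pX: "p ` X \<subseteq> S"
    and Z: "zariski_closed2 Z" and XX: "\<And>P Q. P \<in> X \<Longrightarrow> Q \<in> X \<Longrightarrow> (p P, p Q) \<in> Z"
  shows "S \<times> S \<subseteq> Z"
proof -
  have SX: "(P, p Q) \<in> Z" if P: "P \<in> S" and Q: "Q \<in> X" for P Q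
  proof -
    have "p ` X \<subseteq> {P \<in> proj_space. (P, p Q) \<in> Z}" using XX pX S Q by blast
    moreover have "zariski_closed {P \<in> proj_space. (P, p Q) \<in> Z}"
      using zariski_closed2_slice_fst[OF Z] pX S Q by blast
    ultimately show ?thesis using dom P unfolding dominant_def by blast
  qed
  have "(P, Q) \<in> Z" if P: "P \<in> S" and Q: "Q \<in> S" for P Q
  proof -
    have "p ` X \<subseteq> {Q \<in> proj_space. (P, Q) \<in> Z}" using SX P pX S by blast
    moreover have "zariski_closed {Q \<in> proj_space. (P, Q) \<in> Z}"
      using zariski_closed2_slice_snd[OF Z] P S by blast
    ultimately show ?thesis using dom Q unfolding dominant_def by blast
  qed
  then show ?thesis by blast
qed

lemma h_specialI:
  assumes "\<And>Z. zariski_closed2 Z \<Longrightarrow> (\<And>x y. x \<in> X \<Longrightarrow> y \<in> X \<Longrightarrow> h_equiv X x y \<Longrightarrow> (x, y) \<in> Z)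
    \<Longrightarrow> X \<times> X \<subseteq> Z"
  shows "h_special X"
  unfolding h_special_def using assms by blast

lemma h_specialD:
  assumes "h_special X" "zariski_closed2 Z"
    and "\<And>x y. x \<in> X \<Longrightarrow> y \<in> X \<Longrightarrow> h_equiv X x y \<Longrightarrow> (x, y) \<in> Z"
  shows "X \<times> X \<subseteq> Z"
  using assms unfolding h_special_def by blast

theorem lemma4p3:
  fixes X :: "(complex^'n) set set" and S :: "(complex^'m) set set"
    and p :: "(complex^'n) set \<Rightarrow> (complex^'m) set"
  assumes "qp_variety X" and "h_special X"
    and "qp_variety S" and "qp_morphism X S p" and "dominant X S p"
  shows "h_special S"
proof (rule h_specialI)
  fix Z assume Z: "zariski_closed2 Z"
    and h_rel: "\<And>x y. x \<in> S \<Longrightarrow> y \<in> S \<Longrightarrow> h_equiv S x y \<Longrightarrow> (x, y) \<in> Z"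
  have X: "X \<subseteq> proj_space" and S: "S \<subseteq> proj_space"
    using assms(1,3) quasi_projective_subset_proj_space by (auto simp: qp_variety_def)
  have pX: "p ` X \<subseteq> S" using assms(4) by (auto simp: qp_morphism_def)
  obtain Z' where Z': "zariski_closed2 Z'" "\<And>P Q. P \<in> X \<Longrightarrow> Q \<in> X \<Longrightarrow> (P, Q) \<in> Z' \<longleftrightarrow> (p P, p Q) \<in> Z"
    using zariski_closed2_preimage[OF assms(4) X Z] by blast
  have "X \<times> X \<subseteq> Z'"
  proof (rule h_specialD[OF assms(2) Z'(1)])
    fix x y assume "x \<in> X" "y \<in> X" "h_equiv X x y"
    then show "(x, y) \<in> Z'" using Z'(2) h_rel h_equiv_image[OF assms(4) X] pX by blast
  qed
  then show "S \<times> S \<subseteq> Z" using Z'(2) by (intro dominant_square_subset[OF assms(5) S pX Z]) blast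
qed

end
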